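(* Consider the infinite-horizon $N$-player KL-regularized Markov game and the algorithm described in the context (run with any $\alpha>0$), and suppose the linear mixture assumption and the realizability assumption hold. Define, for $t\in[T]$, $f\in\mathcal F$, $n\in[N]$, $$X_t^f=\log\frac{\mathbb{P}(s'_t|s_t,\boldsymbol a_t)}{\mathbb{P}_f(s'_t|s_t,\boldsymbol a_t)},\qquad Y_{t,n}^f=\log\frac{\mathbb{P}({s^n_t}'|s^n_t,\boldsymbol a^n_t)}{\mathbb{P}_f({s^n_t}'|s^n_t,\boldsymbol a^n_t)},$$ and $\ell(f,s,\boldsymbol a)=D_H^2\big(\mathbb{P}_f(\cdot|s,\boldsymbol a)\,\|\,\mathbb{P}(\cdot|s,\boldsymbol a)\big)$. Then for any $\delta\in(0,1)$, with probability at least $1-\delta$, for all $t\in[T]$ and $f\in\mathcal F$, $$-\sum_{i=1}^{t-1}X_i^f\le-2\sum_{i=1}^{t-1}\mathbb{E}_{(s,\boldsymbol a)\sim d^{\boldsymbol\pi_i}(\rho)}[\ell(f,s,\boldsymbol a)]+2\sqrt2+2\log\Big(\frac{N+1}{\delta}\Big)+2d\log\big(1+2\sqrt d\,T^2|\mathcal S|^2\big),$$ and for all $t\in[T]$, $f\in\mathcal F$, $n\in[N]$, $$-\sum_{i=1}^{t-1}Y_{i,n}^f\le-2\sum_{i=1}^{t-1}\mathbb{E}_{(s,\boldsymbol a)\sim d^{\widetilde{\boldsymbol\pi}_{i,n}}(\rho)}[\ell(f,s,\boldsymbol a)]+2\sqrt2+2\log\Big(\frac{N+1}{\delta}\Big)+2d\log\big(1+2\sqrt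 d\,T^2|\mathcal S|^2\big),$$ where $\widetilde{\boldsymbol\pi}_{i,n}=(\widetilde\pi^n_i,\boldsymbol\pi_i^{-n})$.
   Context: Game: $N$ players, finite state space $\mathcal{S}$, joint action space $\mathcal{A}=\mathcal{A}_1\times\cdots\times\mathcal{A}_N$, discount $\gamma\in[0,1)$, true transition kernel $\mathbb{P}:\mathcal{S}\times\mathcal{A}\to\Delta(\mathcal{S})$, rewards $r^n\in[0,1]$, initial distribution $\rho$, KL coefficient $\beta\ge0$, reference policies $\pi^n_{\mathrm{ref}}$. Joint policies $\boldsymbol\pi=(\pi^1,\dots,\pi^N)$, $\pi^n:\mathcal S\to\Delta(\mathcal A_n)$; $\boldsymbol\pi^{-n}$ = all but player $n$. For a kernel $Q$, $V^{\boldsymbol\pi}_{Q,n}(\rho)=\mathbb{E}_{s_0\sim\rho}\mathbb{E}_{Q,\boldsymbol\pi}[\sum_{h\ge0}\gamma^h(r^n(s_h,\boldsymbol a_h)-\beta\log\frac{\pi^n(a^n_h|s_h)}{\pi^n_{\mathrm{ref}}(a^n_h|s_h)})]$; $V_{f,n}^{\boldsymbol\pi}:=V^{\boldsymbol\pi}_{\mathbb P_f,n}$, $V_{f,n}^{\star,\boldsymbol\pi^{-n}}(\rho)=\max_{\pi^n}V_{f,n}^{\pi^n,\boldsymbol\pi^{-n}}(\rho)$. Discounted visitation under the true kernel: $d^{\boldsymbol\pi}_{\bar s,\bar{\boldsymbol a}}(\rho)=(1-\gamma)\sum_{h\ge0}\gamma^h\mathbb{P}^{\boldsymbol\pi}(s_h=\bar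 s,\boldsymbol a_h=\bar{\boldsymbol a})$ with $s_0\sim\rho$. Squared Hellinger distance: $D_H^2(P\|Q)=\frac12\sum_x(\sqrt{P(x)}-\sqrt{Q(x)})^2$. Linear mixture assumption: $\mathcal{F}=\{f: f(s,\boldsymbol a,s')=\phi(s,\boldsymbol a,s')^\top\theta,\ \theta\in\Theta\}$, known $\phi:\mathcal S\times\mathcal A\times\mathcal S\to\mathbb R^d$ with $\|\phi\|_2\le1$, $\Theta\subseteq\{\|\theta\|_2\le\sqrt d\}$, and $\mathbb P_f(\cdot|s,\boldsymbol a):=f(s,\boldsymbol a,\cdot)\in\Delta(\mathcal S)$ for all $f\in\mathcal F$. Realizability: some $f^\star\in\mathcal F$ has $\mathbb P_{f^\star}=\mathbb P$. Algorithm: datasets $\mathcal D^n_0=\emptyset$, $\mathcal D_0=\cup_n\mathcal D^n_0$; for $t=1,\dots,T$: $\boldsymbol\pi_t$ is a Nash or coarse correlated equilibrium of the regularized game with kernel $\mathbb P_{f_{t-1}}$; $f_t\in\arg\min_{f\in\mathcal F}\sum_{(s,\boldsymbol a,s')\in\mathcal D_{t-1}}-\log\mathbb P_f(s'|s,\boldsymbol a)-\alpha\sum_n V_{f,n}^{\star,\boldsymbol\pi_t^{-n}}(\rho)$; $\widetilde\pi^n_t\in\arg\max_{\pi^n}V_{f_t,n}^{\pi^n,\boldsymbol\pi_t^{-n}}(\rho)$; then fresh samples $(s_t,\boldsymbol a_t)\sim d^{\boldsymbol\pi_t}(\rho)$, $s_t'\sim\mathbb P(\cdot|s_t,\boldsymbol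 a_t)$, and for each $n$, $(s^n_t,\boldsymbol a^n_t)\sim d^{(\widetilde\pi^n_t,\boldsymbol\pi_t^{-n})}(\rho)$, ${s^n_t}'\sim\mathbb P(\cdot|s^n_t,\boldsymbol a^n_t)$; $\mathcal D^n_t=\mathcal D^n_{t-1}\cup\{(s_t,\boldsymbol a_t,s_t'),(s^n_t,\boldsymbol a^n_t,{s^n_t}')\}$, $\mathcal D_t=\cup_n\mathcal D^n_t$. *)

theory Defs
  imports "HOL-Analysis.Analysis" "HOL-Probability.Probability"
begin

text \<open>Players are the elements of a finite type 'p (so N = CARD('p)), states the elements
  of a finite type 's, individual actions live in a type 'b with per-player action sets
  A n.  Parameters theta live in real^'d
  (so d = CARD('d)).\<close>

type_synonym ('s,'p,'b) transition = "'s \<times> ('p \<Rightarrow> 'b) \<times> 's"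
type_synonym ('s,'p,'b) round = "('s,'p,'b) transition \<times> ('p \<Rightarrow> ('s,'p,'b) transition)"

definition joint_actions :: "('p \<Rightarrow> 'b set) \<Rightarrow> ('p \<Rightarrow> 'b) set" where
  "joint_actions A = {a. \<forall>n. a n \<in> A n}"

definition valid_policy :: "'b set \<Rightarrow> ('s \<Rightarrow> 'b pmf) \<Rightarrow> bool" where
  "valid_policy An \<sigma> \<longleftrightarrow> (\<forall>s. set_pmf (\<sigma> s) \<subseteq> An)"

definition valid_jpolicy :: "('p \<Rightarrow> 'b set) \<Rightarrow> ('p \<Rightarrow> 's \<Rightarrow> 'b pmf) \<Rightarrow> bool" where
  "valid_jpolicy A \<pi> \<longleftrightarrow> (\<forall>n. valid_policy (A n) (\<pi> n))"

definition jact_dist :: "('p::finite \<Rightarrow> 's \<Rightarrow> 'b pmf) \<Rightarrow> 's \<Rightarrow> ('p \<Rightarrow> 'b) pmf" where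
  "jact_dist \<pi> s = Pi_pmf UNIV undefined (\<lambda>n. \<pi> n s)"

primrec state_dist :: "('s \<Rightarrow> ('p \<Rightarrow> 'b) \<Rightarrow> 's pmf) \<Rightarrow> ('p::finite \<Rightarrow> 's \<Rightarrow> 'b pmf)
    \<Rightarrow> 's pmf \<Rightarrow> nat \<Rightarrow> 's pmf" where
  "state_dist Q \<pi> \<rho> 0 = \<rho>"
| "state_dist Q \<pi> \<rho> (Suc h) =
     bind_pmf (state_dist Q \<pi> \<rho> h) (\<lambda>s. bind_pmf (jact_dist \<pi> s) (\<lambda>a. Q s a))"

definition sa_dist :: "('s \<Rightarrow> ('p \<Rightarrow> 'b) \<Rightarrow> 's pmf) \<Rightarrow> ('p::finite \<Rightarrow> 's \<Rightarrow> 'b pmf)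
    \<Rightarrow> 's pmf \<Rightarrow> nat \<Rightarrow> ('s \<times> ('p \<Rightarrow> 'b)) pmf" where
  "sa_dist Q \<pi> \<rho> h = bind_pmf (state_dist Q \<pi> \<rho> h) (\<lambda>s. map_pmf (\<lambda>a. (s, a)) (jact_dist \<pi> s))"

text \<open>Discounted visitation d^pi(rho) = (1-gamma) sum_h gamma^h P(s_h, a_h), realised as the
  mixture of the laws of (s_h,a_h) with geometric weights (1-gamma) gamma^h.\<close>
definition visitation :: "real \<Rightarrow> ('s \<Rightarrow> ('p \<Rightarrow> 'b) \<Rightarrow> 's pmf) \<Rightarrow> ('p::finite \<Rightarrow> 's \<Rightarrow> 'b pmf)
    \<Rightarrow> 's pmf \<Rightarrow> ('s \<times> ('p \<Rightarrow> 'b)) pmf" where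
  "visitation \<gamma> Q \<pi> \<rho> = bind_pmf (geometric_pmf (1 - \<gamma>)) (\<lambda>h. sa_dist Q \<pi> \<rho> h)"

definition reg_reward :: "real \<Rightarrow> ('p \<Rightarrow> 's \<Rightarrow> 'b pmf) \<Rightarrow> ('p \<Rightarrow> 's \<Rightarrow> ('p \<Rightarrow> 'b) \<Rightarrow> real)
    \<Rightarrow> ('p \<Rightarrow> 's \<Rightarrow> 'b pmf) \<Rightarrow> 'p \<Rightarrow> 's \<Rightarrow> ('p \<Rightarrow> 'b) \<Rightarrow> real" where
  "reg_reward \<beta> \<pi>ref r \<pi> n s a =
     r n s a - \<beta> * ln (pmf (\<pi> n s) (a n) / pmf (\<pi>ref n s) (a n))"

definition game_value :: "real \<Rightarrow> real \<Rightarrow> ('p \<Rightarrow> 's \<Rightarrow> 'b pmf) \<Rightarrow> ('p \<Rightarrow> 's \<Rightarrow> ('p \<Rightarrow> 'b) \<Rightarrow> real)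
    \<Rightarrow> ('s \<Rightarrow> ('p \<Rightarrow> 'b) \<Rightarrow> 's pmf) \<Rightarrow> ('p::finite \<Rightarrow> 's \<Rightarrow> 'b pmf) \<Rightarrow> 'p \<Rightarrow> 's pmf \<Rightarrow> real" where
  "game_value \<gamma> \<beta> \<pi>ref r Q \<pi> n \<rho> =
     (\<Sum>h. \<gamma> ^ h * measure_pmf.expectation (sa_dist Q \<pi> \<rho> h)
                     (\<lambda>(s, a). reg_reward \<beta> \<pi>ref r \<pi> n s a))"

definition br_value :: "real \<Rightarrow> real \<Rightarrow> ('p \<Rightarrow> 's \<Rightarrow> 'b pmf) \<Rightarrow> ('p \<Rightarrow> 's \<Rightarrow> ('p \<Rightarrow> 'b) \<Rightarrow> real)
    \<Rightarrow> ('p \<Rightarrow> 'b set) \<Rightarrow> ('s \<Rightarrow> ('p \<Rightarrow> 'b) \<Rightarrow> 's pmf) \<Rightarrow> ('p::finite \<Rightarrow> 's \<Rightarrow> 'b pmf)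
    \<Rightarrow> 'p \<Rightarrow> 's pmf \<Rightarrow> real" where
  "br_value \<gamma> \<beta> \<pi>ref r A Q \<pi> n \<rho> =
     (SUP \<sigma> \<in> {\<sigma>. valid_policy (A n) \<sigma>}. game_value \<gamma> \<beta> \<pi>ref r Q (\<pi>(n := \<sigma>)) n \<rho>)"

text \<open>Nash / coarse correlated equilibrium (for product joint policies the two conditions
  coincide): no player gains by a unilateral deviation.\<close>
definition is_equilibrium :: "real \<Rightarrow> real \<Rightarrow> ('p \<Rightarrow> 's \<Rightarrow> 'b pmf) \<Rightarrow> ('p \<Rightarrow> 's \<Rightarrow> ('p \<Rightarrow> 'b) \<Rightarrow> real)
    \<Rightarrow> ('p \<Rightarrow> 'b set) \<Rightarrow> ('s \<Rightarrow> ('p \<Rightarrow> 'b) \<Rightarrow> 's pmf) \<Rightarrow> ('p::finite \<Rightarrow> 's \<Rightarrow> 'b pmf)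
    \<Rightarrow> 's pmf \<Rightarrow> bool" where
  "is_equilibrium \<gamma> \<beta> \<pi>ref r A Q \<pi> \<rho> \<longleftrightarrow>
     valid_jpolicy A \<pi> \<and>
     (\<forall>n. br_value \<gamma> \<beta> \<pi>ref r A Q \<pi> n \<rho> \<le> game_value \<gamma> \<beta> \<pi>ref r Q \<pi> n \<rho>)"

definition model_kernel :: "('s \<Rightarrow> ('p \<Rightarrow> 'b) \<Rightarrow> 's \<Rightarrow> real^'d) \<Rightarrow> real^'d
    \<Rightarrow> 's \<Rightarrow> ('p \<Rightarrow> 'b) \<Rightarrow> 's pmf" where
  "model_kernel \<phi> \<theta> s a = embed_pmf (\<lambda>s'. \<phi> s a s' \<bullet> \<theta>)"

definition hellinger_sq :: "'s::finite pmf \<Rightarrow> 's pmf \<Rightarrow> real" where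
  "hellinger_sq p q = (1/2) * (\<Sum>x\<in>UNIV. (sqrt (pmf p x) - sqrt (pmf q x))^2)"

definition llr :: "'s pmf \<Rightarrow> 's pmf \<Rightarrow> 's \<Rightarrow> ereal" where
  "llr p q x = (if pmf q x = 0 then \<infinity> else ereal (ln (pmf p x / pmf q x)))"

definition nll :: "'s pmf \<Rightarrow> 's \<Rightarrow> ereal" where
  "nll q x = (if pmf q x = 0 then \<infinity> else ereal (- ln (pmf q x)))"

definition model_nll :: "('s \<Rightarrow> ('p \<Rightarrow> 'b) \<Rightarrow> 's \<Rightarrow> real^'d) \<Rightarrow> real^'d
    \<Rightarrow> ('s,'p,'b) transition \<Rightarrow> ereal" where
  "model_nll \<phi> \<theta> z = (case z of (s, a, s') \<Rightarrow> nll (model_kernel \<phi> \<theta> s a) s')"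

definition llr_sample :: "('s \<Rightarrow> ('p \<Rightarrow> 'b) \<Rightarrow> 's pmf) \<Rightarrow> ('s \<Rightarrow> ('p \<Rightarrow> 'b) \<Rightarrow> 's \<Rightarrow> real^'d)
    \<Rightarrow> real^'d \<Rightarrow> ('s,'p,'b) transition \<Rightarrow> ereal" where
  "llr_sample P \<phi> \<theta> z = (case z of (s, a, s') \<Rightarrow> llr (P s a) (model_kernel \<phi> \<theta> s a) s')"

definition ell :: "('s::finite \<Rightarrow> ('p \<Rightarrow> 'b) \<Rightarrow> 's pmf) \<Rightarrow> ('s \<Rightarrow> ('p \<Rightarrow> 'b) \<Rightarrow> 's \<Rightarrow> real^'d)
    \<Rightarrow> real^'d \<Rightarrow> 's \<Rightarrow> ('p \<Rightarrow> 'b) \<Rightarrow> real" where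
  "ell P \<phi> \<theta> s a = hellinger_sq (model_kernel \<phi> \<theta> s a) (P s a)"

text \<open>MLE objective of the algorithm: the data D_{t-1} is the collection of all samples of the
  rounds 1..t-1 (one "on-policy" sample and one sample per player in each round).\<close>
definition mle_objective :: "real \<Rightarrow> real \<Rightarrow> ('p \<Rightarrow> 's \<Rightarrow> 'b pmf) \<Rightarrow> ('p \<Rightarrow> 's \<Rightarrow> ('p \<Rightarrow> 'b) \<Rightarrow> real)
    \<Rightarrow> ('p \<Rightarrow> 'b set) \<Rightarrow> ('s \<Rightarrow> ('p \<Rightarrow> 'b) \<Rightarrow> 's \<Rightarrow> real^'d) \<Rightarrow> real \<Rightarrow> 's pmf
    \<Rightarrow> ('s,'p::finite,'b) round list \<Rightarrow> ('p \<Rightarrow> 's \<Rightarrow> 'b pmf) \<Rightarrow> real^'d \<Rightarrow> ereal" where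
  "mle_objective \<gamma> \<beta> \<pi>ref r A \<phi> \<alpha> \<rho> D \<pi> \<theta> =
     sum_list (map (\<lambda>w. model_nll \<phi> \<theta> (fst w) + (\<Sum>n\<in>UNIV. model_nll \<phi> \<theta> (snd w n))) D)
     - ereal (\<alpha> * (\<Sum>n\<in>UNIV. br_value \<gamma> \<beta> \<pi>ref r A (model_kernel \<phi> \<theta>) \<pi> n \<rho>))"

definition transition_sample :: "real \<Rightarrow> ('s \<Rightarrow> ('p \<Rightarrow> 'b) \<Rightarrow> 's pmf) \<Rightarrow> ('p::finite \<Rightarrow> 's \<Rightarrow> 'b pmf)
    \<Rightarrow> 's pmf \<Rightarrow> ('s,'p,'b) transition pmf" where
  "transition_sample \<gamma> P \<pi> \<rho> =
     bind_pmf (visitation \<gamma> P \<pi> \<rho>) (\<lambda>(s, a). map_pmf (\<lambda>s'. (s, a, s')) (P s a))"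

text \<open>Fresh independent samples of one round, given pi_t and the best responses tilde pi^n_t.\<close>
definition round_dist :: "real \<Rightarrow> ('s \<Rightarrow> ('p \<Rightarrow> 'b) \<Rightarrow> 's pmf) \<Rightarrow> 's pmf
    \<Rightarrow> ('p::finite \<Rightarrow> 's \<Rightarrow> 'b pmf) \<Rightarrow> ('p \<Rightarrow> 's \<Rightarrow> 'b pmf) \<Rightarrow> ('s,'p,'b) round pmf" where
  "round_dist \<gamma> P \<rho> \<pi> \<pi>t =
     pair_pmf (transition_sample \<gamma> P \<pi> \<rho>)
              (Pi_pmf UNIV undefined (\<lambda>n. transition_sample \<gamma> P (\<pi>(n := \<pi>t n)) \<rho>))"

text \<open>Law of the sample history of the first k rounds, when pi_t = Pol(history of rounds < t)
  and tilde pi^n_t = Br(history of rounds < t) n.\<close>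
primrec run_dist :: "real \<Rightarrow> ('s \<Rightarrow> ('p \<Rightarrow> 'b) \<Rightarrow> 's pmf) \<Rightarrow> 's pmf
    \<Rightarrow> (('s,'p::finite,'b) round list \<Rightarrow> 'p \<Rightarrow> 's \<Rightarrow> 'b pmf)
    \<Rightarrow> (('s,'p,'b) round list \<Rightarrow> 'p \<Rightarrow> 's \<Rightarrow> 'b pmf) \<Rightarrow> nat \<Rightarrow> ('s,'p,'b) round list pmf" where
  "run_dist \<gamma> P \<rho> Pol Br 0 = return_pmf []"
| "run_dist \<gamma> P \<rho> Pol Br (Suc k) =
     bind_pmf (run_dist \<gamma> P \<rho> Pol Br k)
       (\<lambda>hs. map_pmf (\<lambda>w. hs @ [w]) (round_dist \<gamma> P \<rho> (Pol hs) (Br hs)))"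

end

theory Submission
  imports Defs
begin

text \<open>Fix an \<open>\<epsilon>\<close>-net \<open>C\<close> of the parameter ball. For a centre \<open>c\<close> the optimistic envelope
  \<open>q\<^sub>c = \<phi> \<bullet> c + \<epsilon>\<close> dominates every model \<open>P\<^sub>\<theta>\<close> with \<open>dist \<theta> c < \<epsilon>\<close>, so
  \<open>-X\<^sup>\<theta> \<le> 2 Z\<^sub>c\<close> for \<open>Z\<^sub>c = log (q\<^sub>c / P) / 2\<close>, while by the Hellinger affinity
  \<open>E exp Z\<^sub>c = \<Sum> sqrt (P q\<^sub>c) \<le> 1 - \<ell>(\<theta>) + |S| sqrt (2 \<epsilon>)\<close>. Along the adaptively sampled
  history the products of \<open>exp Z\<^sub>c / E exp Z\<^sub>c\<close> are nonnegative supermartingales, so by Ville's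
  inequality and a union bound over the centres and the \<open>N + 1\<close> sample streams, with probability
  \<open>1 - \<delta>\<close> none of them ever exceeds \<open>|C| (N + 1) / \<delta>\<close>. Taking logarithms and using
  \<open>log x \<le> x - 1\<close> gives the bound: \<open>\<epsilon> = 1 / (T\<^sup>2 |S|\<^sup>2)\<close> keeps the discretisation cost below
  \<open>2 sqrt 2\<close>, and the volume bound \<open>|C| \<le> (1 + 2 sqrt d / \<epsilon>)\<^sup>d\<close> gives the last term.\<close>

section \<open>Nets in Euclidean balls\<close>

lemma card_separated_le:
  fixes F :: "(real^'d) set"
  assumes "finite F" and "F \<subseteq> cball 0 R" and "0 < \<epsilon>" and "0 \<le> R"
    and separated: "\<forall>x\<in>F. \<forall>y\<in>F. x \<noteq> y \<longrightarrow> \<epsilon> \<le> dist x y"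
  shows "real (card F) \<le> (1 + 2 * R / \<epsilon>) ^ CARD('d)"
proof -
  let ?V = "unit_ball_vol (real CARD('d))"
  have fmeasurable_ball: "ball (c::real^'d) r \<in> fmeasurable lborel" for c r
    using emeasure_lborel_ball_finite by (auto simp: fmeasurable_def top_unique less_top)
  have "real (card F) * (?V * (\<epsilon>/2) ^ CARD('d)) = (\<Sum>c\<in>F. measure lborel (ball c (\<epsilon>/2)))"
    using \<open>0 < \<epsilon>\<close> by (simp add: content_ball)
  also have "\<dots> = measure lborel (\<Union>c\<in>F. ball c (\<epsilon>/2))"
  proof (rule measure_UNION'[symmetric])
    show "pairwise (\<lambda>i j. disjnt (ball i (\<epsilon>/2)) (ball j (\<epsilon>/2))) F"
    proof (rule pairwiseI)
      fix i j assume "i \<in> F" "j \<in> F" "i \<noteq> j"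
      then have "\<epsilon> \<le> dist i j" using separated by blast
      then show "disjnt (ball i (\<epsilon>/2)) (ball j (\<epsilon>/2))"
        unfolding disjnt_def by (intro disjoint_ballI) simp
    qed
  qed (use \<open>finite F\<close> fmeasurable_ball in auto)
  also have "\<dots> \<le> measure lborel (ball (0::real^'d) (R + \<epsilon>/2))"
  proof (intro measure_mono_fmeasurable)
    show "(\<Union>c\<in>F. ball c (\<epsilon>/2)) \<subseteq> ball 0 (R + \<epsilon>/2)"
    proof
      fix x assume "x \<in> (\<Union>c\<in>F. ball c (\<epsilon>/2))"
      then obtain c where "c \<in> F" "dist c x < \<epsilon>/2" by auto
      moreover have "dist 0 x \<le> dist 0 c + dist c x" by (rule dist_triangle)
      ultimately show "x \<in> ball 0 (R + \<epsilon>/2)" using \<open>F \<subseteq> cball 0 R\<close> by force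
    qed
  qed (auto simp: fmeasurable_ball intro!: borel_open open_UN)
  also have "\<dots> = ?V * (R + \<epsilon>/2) ^ CARD('d)"
    using \<open>0 < \<epsilon>\<close> \<open>0 \<le> R\<close> by (simp add: content_ball)
  finally have "real (card F) * (\<epsilon>/2) ^ CARD('d) \<le> (R + \<epsilon>/2) ^ CARD('d)"
    by (simp add: mult.left_commute)
  hence "real (card F) \<le> (R + \<epsilon>/2) ^ CARD('d) / (\<epsilon>/2) ^ CARD('d)"
    using \<open>0 < \<epsilon>\<close> by (simp add: pos_le_divide_eq)
  also have "\<dots> = ((R + \<epsilon>/2) / (\<epsilon>/2)) ^ CARD('d)"
    by (simp only: power_divide)
  also have "(R + \<epsilon>/2) / (\<epsilon>/2) = 1 + 2 * R / \<epsilon>"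
    using \<open>0 < \<epsilon>\<close> by (simp add: field_simps)
  finally show ?thesis .
qed

text \<open>A maximal \<open>\<epsilon>\<close>-separated subset is an \<open>\<epsilon>\<close>-net.\<close>
lemma obtain_finite_net:
  fixes \<Theta> :: "(real^'d) set"
  assumes "\<Theta> \<subseteq> cball 0 R" and "0 < \<epsilon>" and "0 \<le> R"
  obtains C where "finite C" "C \<subseteq> \<Theta>" "real (card C) \<le> (1 + 2 * R / \<epsilon>) ^ CARD('d)"
    "\<forall>\<theta>\<in>\<Theta>. \<exists>c\<in>C. dist \<theta> c < \<epsilon>"
proof -
  define S where "S = {F. finite F \<and> F \<subseteq> \<Theta> \<and> (\<forall>x\<in>F. \<forall>y\<in>F. x \<noteq> y \<longrightarrow> \<epsilon> \<le> dist x y)}"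
  have card_S: "real (card F) \<le> (1 + 2 * R / \<epsilon>) ^ CARD('d)" if "F \<in> S" for F
    using card_separated_le[of F R \<epsilon>] assms that unfolding S_def by auto
  have "card F < Suc (nat \<lceil>(1 + 2 * R / \<epsilon>) ^ CARD('d)\<rceil>)" if "F \<in> S" for F
    using card_S[OF that] by linarith
  moreover have "{} \<in> S" by (simp add: S_def)
  ultimately obtain F where "F \<in> S" and F_max: "\<forall>G\<in>S. card G \<le> card F"
    using Lattices_Big.ex_has_greatest_nat[of "\<lambda>F. F \<in> S" "{}" card] by blast
  show ?thesis
  proof
    show "finite F" "F \<subseteq> \<Theta>" using \<open>F \<in> S\<close> by (auto simp: S_def)
    show "real (card F) \<le> (1 + 2 * R / \<epsilon>) ^ CARD('d)" using card_S[OF \<open>F \<in> S\<close>] .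
    show "\<forall>\<theta>\<in>\<Theta>. \<exists>c\<in>F. dist \<theta> c < \<epsilon>"
    proof (rule ccontr)
      assume "\<not> ?thesis"
      then obtain \<theta> where "\<theta> \<in> \<Theta>" "\<forall>c\<in>F. \<epsilon> \<le> dist \<theta> c" by force
      hence "insert \<theta> F \<in> S" "\<theta> \<notin> F"
        using \<open>F \<in> S\<close> \<open>0 < \<epsilon>\<close> unfolding S_def by (auto simp: dist_commute)
      moreover have "finite F" using \<open>F \<in> S\<close> by (simp add: S_def)
      ultimately show False using F_max by (metis card_insert_disjoint not_less_eq_eq order_refl)
    qed
  qed
qed

section \<open>Ville's inequality for adaptively sampled histories\<close>

primrec history_pmf :: "('h list \<Rightarrow> 'h pmf) \<Rightarrow> nat \<Rightarrow> 'h list pmf" where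
  "history_pmf K 0 = return_pmf []"
| "history_pmf K (Suc k) = bind_pmf (history_pmf K k) (\<lambda>hs. map_pmf (\<lambda>w. hs @ [w]) (K hs))"

lemma length_history_pmf: "hs \<in> set_pmf (history_pmf K k) \<Longrightarrow> length hs = k"
  by (induction k arbitrary: hs) auto

definition history_prod :: "('h list \<Rightarrow> 'h \<Rightarrow> real) \<Rightarrow> 'h list \<Rightarrow> nat \<Rightarrow> real" where
  "history_prod g hs t = (\<Prod>i<t. g (take i hs) (hs ! i))"

text \<open>Ville's inequality is Markov's inequality for this stopped supermartingale.\<close>
definition stopped_prod :: "real \<Rightarrow> ('h list \<Rightarrow> 'h \<Rightarrow> real) \<Rightarrow> 'h list \<Rightarrow> real" where
  "stopped_prod c g hs =
     (\<Prod>i<length hs. if \<exists>j\<le>i. c \<le> history_prod g hs j then 1 else g (take i hs) (hs ! i))"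

lemma history_prod_append: "t \<le> length hs \<Longrightarrow> history_prod g (hs @ [w]) t = history_prod g hs t"
  unfolding history_prod_def by (intro prod.cong) (auto simp: nth_append)

lemma stopped_prod_append:
  "stopped_prod c g (hs @ [w]) =
     stopped_prod c g hs * (if \<exists>j\<le>length hs. c \<le> history_prod g hs j then 1 else g hs w)"
proof -
  have stopped_eq: "(\<exists>j\<le>i. c \<le> history_prod g (hs @ [w]) j) \<longleftrightarrow> (\<exists>j\<le>i. c \<le> history_prod g hs j)"
    if "i \<le> length hs" for i
    using that by (metis history_prod_append le_trans)
  have "stopped_prod c g (hs @ [w])
      = (\<Prod>i<Suc (length hs). if \<exists>j\<le>i. c \<le> history_prod g hs j then 1
                               else g (take i (hs @ [w])) ((hs @ [w]) ! i))"
    unfolding stopped_prod_def using stopped_eq by (intro prod.cong) auto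
  also have "\<dots> = stopped_prod c g hs * (if \<exists>j\<le>length hs. c \<le> history_prod g hs j then 1 else g hs w)"
    unfolding stopped_prod_def prod.lessThan_Suc
    by (intro arg_cong2[where f="(*)"] prod.cong refl) (simp_all add: nth_append cong: if_cong)
  finally show ?thesis .
qed

lemma stopped_prod_nonneg: "(\<And>hs w. 0 \<le> g hs w) \<Longrightarrow> 0 \<le> stopped_prod c g hs"
  unfolding stopped_prod_def by (intro prod_nonneg) auto

lemma stopped_prod_ge:
  assumes "t \<le> length hs" "c \<le> history_prod g hs t"
  shows "c \<le> stopped_prod c g hs"
proof -
  define t0 where "t0 = (LEAST t. c \<le> history_prod g hs t)"
  define F where "F i = (if \<exists>j\<le>i. c \<le> history_prod g hs j then 1 else g (take i hs) (hs ! i))" for i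
  have t0: "c \<le> history_prod g hs t0" "t0 \<le> t"
    unfolding t0_def using assms(2) by (rule LeastI, rule Least_le)
  have not_stopped: "\<not> (\<exists>j\<le>i. c \<le> history_prod g hs j)" if "i < t0" for i
  proof
    assume "\<exists>j\<le>i. c \<le> history_prod g hs j"
    then obtain j where "j \<le> i" "c \<le> history_prod g hs j" by blast
    then have "t0 \<le> j" unfolding t0_def by (intro Least_le)
    with \<open>j \<le> i\<close> \<open>i < t0\<close> show False by simp
  qed
  have "{..<length hs} = {..<t0} \<union> {t0..<length hs}"
    using t0(2) assms(1) by auto
  then have "stopped_prod c g hs = (\<Prod>i\<in>{..<t0} \<union> {t0..<length hs}. F i)"
    by (simp add: stopped_prod_def F_def)
  also have "\<dots> = (\<Prod>i<t0. F i) * (\<Prod>i\<in>{t0..<length hs}. F i)"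
    by (rule prod.union_disjoint) auto
  also have "(\<Prod>i<t0. F i) = history_prod g hs t0"
    unfolding history_prod_def[of g hs t0] by (intro prod.cong refl) (simp add: F_def not_stopped)
  also have "(\<Prod>i\<in>{t0..<length hs}. F i) = 1"
    using t0(1) by (intro prod.neutral) (auto simp: F_def)
  finally show ?thesis using t0(1) by simp
qed

lemma nn_integral_stopped_prod_le_1:
  assumes g_nonneg: "\<And>hs w. 0 \<le> g hs w"
    and g_mean: "\<And>hs. length hs < T \<Longrightarrow> (\<integral>\<^sup>+w. ennreal (g hs w) \<partial>measure_pmf (K hs)) \<le> 1"
    and "k \<le> T"
  shows "(\<integral>\<^sup>+hs. ennreal (stopped_prod c g hs) \<partial>measure_pmf (history_pmf K k)) \<le> 1"
  using \<open>k \<le> T\<close>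
proof (induction k)
  case 0
  then show ?case by (simp add: stopped_prod_def)
next
  case (Suc k)
  have "(\<integral>\<^sup>+w. ennreal (stopped_prod c g (hs @ [w])) \<partial>measure_pmf (K hs)) \<le> ennreal (stopped_prod c g hs)"
    if "hs \<in> set_pmf (history_pmf K k)" for hs
  proof (cases "\<exists>j\<le>length hs. c \<le> history_prod g hs j")
    case False
    have "length hs < T" using that Suc.prems by (auto dest: length_history_pmf)
    have "stopped_prod c g (hs @ [w]) = stopped_prod c g hs * g hs w" for w
      by (subst stopped_prod_append) (simp only: if_not_P[OF False])
    then have "(\<integral>\<^sup>+w. ennreal (stopped_prod c g (hs @ [w])) \<partial>measure_pmf (K hs))
        = ennreal (stopped_prod c g hs) * (\<integral>\<^sup>+w. ennreal (g hs w) \<partial>measure_pmf (K hs))"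
      using stopped_prod_nonneg[of g c hs] g_nonneg by (simp add: ennreal_mult nn_integral_cmult)
    also have "\<dots> \<le> ennreal (stopped_prod c g hs) * 1"
      by (intro mult_left_mono g_mean \<open>length hs < T\<close>) simp
    finally show ?thesis by simp
  qed (simp add: stopped_prod_append)
  then have "(\<integral>\<^sup>+hs. ennreal (stopped_prod c g hs) \<partial>measure_pmf (history_pmf K (Suc k)))
      \<le> (\<integral>\<^sup>+hs. ennreal (stopped_prod c g hs) \<partial>measure_pmf (history_pmf K k))"
    by (simp add: nn_integral_bind_pmf) (intro nn_integral_mono_AE AE_pmfI)
  also have "\<dots> \<le> 1" using Suc by simp
  finally show ?case .
qed

lemma ville_inequality_pmf:
  assumes g_nonneg: "\<And>hs w. 0 \<le> g hs w"
    and g_mean: "\<And>hs. length hs < T \<Longrightarrow> (\<integral>\<^sup>+w. ennreal (g hs w) \<partial>measure_pmf (K hs)) \<le> 1"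
    and "0 < c"
  shows "measure_pmf.prob (history_pmf K T) {hs. \<exists>t\<le>T. c \<le> history_prod g hs t} \<le> 1 / c"
proof -
  let ?A = "{hs. \<exists>t\<le>T. c \<le> history_prod g hs t}"
  have "indicator ?A hs \<le> ennreal (1/c) * ennreal (stopped_prod c g hs)"
    if "hs \<in> set_pmf (history_pmf K T)" for hs
  proof (cases "hs \<in> ?A")
    case True
    then have "c \<le> stopped_prod c g hs"
      using stopped_prod_ge length_history_pmf[OF that] by fastforce
    then have "ennreal 1 \<le> ennreal (1/c * stopped_prod c g hs)"
      using \<open>0 < c\<close> by (intro ennreal_leI) (simp add: field_simps)
    also have "\<dots> = ennreal (1/c) * ennreal (stopped_prod c g hs)"
      by (rule ennreal_mult) (use \<open>0 < c\<close> \<open>c \<le> stopped_prod c g hs\<close> in auto)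
    finally show ?thesis
      using True by simp
  qed simp
  then have "emeasure (measure_pmf (history_pmf K T)) ?A
      \<le> (\<integral>\<^sup>+hs. ennreal (1/c) * ennreal (stopped_prod c g hs) \<partial>measure_pmf (history_pmf K T))"
    by (simp flip: nn_integral_indicator) (intro nn_integral_mono_AE AE_pmfI)
  also have "\<dots> = ennreal (1/c) * (\<integral>\<^sup>+hs. ennreal (stopped_prod c g hs) \<partial>measure_pmf (history_pmf K T))"
    by (rule nn_integral_cmult) simp
  also have "\<dots> \<le> ennreal (1/c) * 1"
    by (intro mult_left_mono nn_integral_stopped_prod_le_1[OF g_nonneg g_mean order_refl] zero_le)
  finally show ?thesis
    using \<open>0 < c\<close> by (simp add: measure_pmf.emeasure_eq_measure)
qed

definition log_mgf :: "'h pmf \<Rightarrow> ('h \<Rightarrow> real) \<Rightarrow> real" where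
  "log_mgf M Z = ln (enn2real (\<integral>\<^sup>+w. ennreal (exp (Z w)) \<partial>measure_pmf M))"

lemma nn_integral_exp_pmf_pos: "0 < (\<integral>\<^sup>+w. ennreal (exp (Z w)) \<partial>measure_pmf M)"
proof -
  have "\<not> (AE w in measure_pmf M. ennreal (exp (Z w)) = 0)"
    using set_pmf_not_empty[of M] by (auto simp: AE_measure_pmf_iff)
  then show ?thesis by (simp add: nn_integral_0_iff_AE zero_less_iff_neq_zero)
qed

lemma log_mgf_le:
  assumes "(\<integral>\<^sup>+w. ennreal (exp (Z w)) \<partial>measure_pmf M) \<le> ennreal b"
  shows "log_mgf M Z \<le> b - 1"
proof -
  let ?I = "\<integral>\<^sup>+w. ennreal (exp (Z w)) \<partial>measure_pmf M"
  have "0 < ?I" by (rule nn_integral_exp_pmf_pos)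
  moreover have "?I < \<top>"
    using assms ennreal_less_top by (rule order.strict_trans1)
  ultimately have "0 < enn2real ?I" by (simp add: enn2real_positive_iff)
  moreover have "enn2real ?I \<le> b"
  proof (rule enn2real_leI[OF _ assms])
    show "0 \<le> b" using \<open>0 < ?I\<close> assms by (auto dest: order.strict_trans2)
  qed
  ultimately show ?thesis
    unfolding log_mgf_def using ln_le_minus_one[of "enn2real ?I"] by linarith
qed

lemma exp_ville_inequality_pmf:
  assumes finite_mgf: "\<And>hs. length hs < T \<Longrightarrow> (\<integral>\<^sup>+w. ennreal (exp (Z w)) \<partial>measure_pmf (K hs)) < \<top>"
    and "0 < c"
  shows "measure_pmf.prob (history_pmf K T)
           {hs. \<exists>t\<le>T. ln c \<le> (\<Sum>i<t. Z (hs ! i) - log_mgf (K (take i hs)) Z)} \<le> 1 / c"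
proof -
  define m where "m hs = enn2real (\<integral>\<^sup>+w. ennreal (exp (Z w)) \<partial>measure_pmf (K hs))" for hs
  define g where "g hs w = exp (Z w) / m hs" for hs w
  have m_pos: "0 < m hs" and m_eq: "ennreal (m hs) = (\<integral>\<^sup>+w. ennreal (exp (Z w)) \<partial>measure_pmf (K hs))"
    if "length hs < T" for hs
    using finite_mgf[OF that] nn_integral_exp_pmf_pos[where Z=Z and M="K hs"]
    by (auto simp: m_def enn2real_positive_iff less_top)
  have g_mean: "(\<integral>\<^sup>+w. ennreal (g hs w) \<partial>measure_pmf (K hs)) \<le> 1" if "length hs < T" for hs
  proof -
    have "(\<integral>\<^sup>+w. ennreal (g hs w) \<partial>measure_pmf (K hs))
        = (\<integral>\<^sup>+w. ennreal (exp (Z w)) \<partial>measure_pmf (K hs)) * ennreal (1 / m hs)"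
      unfolding g_def using m_pos[OF that]
      by (simp add: divide_inverse ennreal_mult nn_integral_multc)
    also have "\<dots> = 1"
      using m_pos[OF that] by (simp flip: m_eq[OF that] ennreal_mult)
    finally show ?thesis by simp
  qed
  have "measure_pmf.prob (history_pmf K T)
           {hs. \<exists>t\<le>T. ln c \<le> (\<Sum>i<t. Z (hs ! i) - log_mgf (K (take i hs)) Z)}
        \<le> measure_pmf.prob (history_pmf K T) {hs. \<exists>t\<le>T. c \<le> history_prod g hs t}"
  proof (rule measure_pmf.finite_measure_mono_AE[OF AE_pmfI], safe)
    fix hs t assume "hs \<in> set_pmf (history_pmf K T)" "t \<le> T"
      and bound: "ln c \<le> (\<Sum>i<t. Z (hs ! i) - log_mgf (K (take i hs)) Z)"
    have "length (take i hs) < T" if "i < t" for i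
      using that \<open>t \<le> T\<close> length_history_pmf[OF \<open>hs \<in> _\<close>] by simp
    then have "history_prod g hs t = exp (\<Sum>i<t. Z (hs ! i) - log_mgf (K (take i hs)) Z)"
      unfolding history_prod_def g_def log_mgf_def
      by (simp add: exp_sum exp_diff m_pos flip: m_def)
    moreover have "exp (ln c) \<le> exp (\<Sum>i<t. Z (hs ! i) - log_mgf (K (take i hs)) Z)"
      using bound by simp
    ultimately show "\<exists>t\<le>T. c \<le> history_prod g hs t"
      using \<open>t \<le> T\<close> \<open>0 < c\<close> by auto
  qed simp
  also have "\<dots> \<le> 1 / c"
    by (rule ville_inequality_pmf[OF _ g_mean \<open>0 < c\<close>]) (simp add: g_def m_def)
  finally show ?thesis .
qed

lemma measure_pmf_prob_UN_le:
  fixes p :: real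
  assumes "finite I" "\<And>i. i \<in> I \<Longrightarrow> measure_pmf.prob M (B i) \<le> p"
  shows "measure_pmf.prob M (\<Union>i\<in>I. B i) \<le> card I * p"
proof -
  have "measure_pmf.prob M (\<Union>i\<in>I. B i) \<le> (\<Sum>i\<in>I. measure_pmf.prob M (B i))"
    using assms(1) by (rule measure_pmf.finite_measure_subadditive_finite) simp
  also have "\<dots> \<le> (\<Sum>i\<in>I. p)"
    using assms(2) by (rule sum_mono)
  finally show ?thesis by simp
qed

lemma measure_pmf_prob_ge_of_compl:
  assumes "measure_pmf.prob M B \<le> \<delta>" "- B \<subseteq> A"
  shows "1 - \<delta> \<le> measure_pmf.prob M A"
proof -
  have "1 - \<delta> \<le> measure_pmf.prob M (- B)"
    using assms(1) measure_pmf.prob_compl[of B M] by (simp add: Compl_eq_Diff_UNIV)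
  also have "\<dots> \<le> measure_pmf.prob M A"
    using assms(2) by (rule measure_pmf.finite_measure_mono) simp
  finally show ?thesis .
qed

section \<open>Hellinger affinity and the half log-likelihood ratio\<close>

lemma hellinger_affinity:
  "(\<Sum>x\<in>UNIV. sqrt (pmf p x * pmf q x)) = 1 - hellinger_sq p (q :: 's::finite pmf)"
proof -
  have "hellinger_sq p q = (\<Sum>x\<in>UNIV. pmf p x + pmf q x - 2 * sqrt (pmf p x * pmf q x)) / 2"
    unfolding hellinger_sq_def by (simp add: power2_diff real_sqrt_mult mult.assoc)
  also have "\<dots> = ((\<Sum>x\<in>UNIV. pmf p x) + (\<Sum>x\<in>UNIV. pmf q x) - 2 * (\<Sum>x\<in>UNIV. sqrt (pmf p x * pmf q x))) / 2"
    by (simp add: sum.distrib sum_subtractf sum_distrib_left)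
  finally show ?thesis by (simp add: sum_pmf_eq_1)
qed

lemma hellinger_sq_nonneg: "0 \<le> hellinger_sq p q"
  unfolding hellinger_sq_def by (intro mult_nonneg_nonneg sum_nonneg) auto

lemma hellinger_sq_le_1: "hellinger_sq p q \<le> 1"
  using hellinger_affinity[of p q] sum_nonneg[of UNIV "\<lambda>x. sqrt (pmf p x * pmf q x)"] by simp

lemma sum_sqrt_pmf_mult_le:
  fixes p p' :: "'s::finite pmf" and q :: "'s \<Rightarrow> real"
  assumes "\<And>x. q x \<le> pmf p' x + 2 * \<epsilon>" and "0 \<le> \<epsilon>"
  shows "(\<Sum>x\<in>UNIV. sqrt (pmf p x * q x)) \<le> 1 - hellinger_sq p' p + real CARD('s) * sqrt (2 * \<epsilon>)"
proof -
  have "sqrt (pmf p x * q x) \<le> sqrt (pmf p' x * pmf p x) + sqrt (2 * \<epsilon>)" for x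
  proof -
    have "sqrt (pmf p x * q x) \<le> sqrt (pmf p x * pmf p' x + pmf p x * (2 * \<epsilon>))"
      using assms(1)[of x] by (intro real_sqrt_le_mono) (simp flip: distrib_left add: mult_left_mono)
    also have "\<dots> \<le> sqrt (pmf p x * pmf p' x) + sqrt (pmf p x * (2 * \<epsilon>))"
      using \<open>0 \<le> \<epsilon>\<close> by (intro sqrt_add_le_add_sqrt) auto
    also have "sqrt (pmf p x * (2 * \<epsilon>)) \<le> sqrt (2 * \<epsilon>)"
      using \<open>0 \<le> \<epsilon>\<close> pmf_le_1[of p x] by (intro real_sqrt_le_mono) (simp add: mult_left_le_one_le)
    finally show ?thesis by (simp add: mult.commute)
  qed
  then have "(\<Sum>x\<in>UNIV. sqrt (pmf p x * q x)) \<le> (\<Sum>x\<in>UNIV. sqrt (pmf p' x * pmf p x) + sqrt (2 * \<epsilon>))"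
    by (rule sum_mono)
  also have "\<dots> = 1 - hellinger_sq p' p + real CARD('s) * sqrt (2 * \<epsilon>)"
    by (simp add: sum.distrib hellinger_affinity)
  finally show ?thesis .
qed

text \<open>The value \<open>0\<close> off the support of \<open>P\<close> is a dummy: such transitions have probability zero.\<close>
definition half_log_ratio :: "('s \<Rightarrow> ('p \<Rightarrow> 'b) \<Rightarrow> 's pmf) \<Rightarrow> ('s \<Rightarrow> ('p \<Rightarrow> 'b) \<Rightarrow> 's \<Rightarrow> real)
    \<Rightarrow> ('s,'p,'b) transition \<Rightarrow> real" where
  "half_log_ratio P q z = (case z of (s, a, s') \<Rightarrow>
     if pmf (P s a) s' = 0 then 0 else ln (q s a s' / pmf (P s a) s') / 2)"

lemma mult_exp_half_ln_ratio:
  assumes "0 < p" "0 < q"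
  shows "p * exp (ln (q / p) / 2) = sqrt (p * q)"
proof -
  have "p * exp (ln (q / p) / 2) = sqrt (p\<^sup>2) * sqrt (q / p)"
    using assms by (simp add: powr_def powr_half_sqrt[symmetric])
  also have "\<dots> = sqrt (p\<^sup>2 * (q / p))"
    by (rule real_sqrt_mult[symmetric])
  also have "p\<^sup>2 * (q / p) = p * q"
    using assms by (simp add: power2_eq_square)
  finally show ?thesis .
qed

lemma neg_llr_sample_le_half_log_ratio:
  assumes dominated: "\<And>s a s'. pmf (model_kernel \<phi> \<theta> s a) s' \<le> q s a s'"
    and q_pos: "\<And>s a s'. 0 < q s a s'"
  shows "- llr_sample P \<phi> \<theta> z \<le> ereal (2 * half_log_ratio P q z)"
proof -
  obtain s a s' where z: "z = (s, a, s')" by (cases z)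
  let ?p = "pmf (P s a) s'" and ?p\<theta> = "pmf (model_kernel \<phi> \<theta> s a) s'"
  consider "?p\<theta> = 0" | "?p = 0" "?p\<theta> \<noteq> 0" | "0 < ?p" "0 < ?p\<theta>"
    by (metis pmf_nonneg order_less_le)
  then show ?thesis
  proof cases
    case 3
    have "- ln (?p / ?p\<theta>) = ln (?p\<theta> / ?p)" using 3 by (simp add: ln_div)
    also have "\<dots> \<le> ln (q s a s' / ?p)"
      using 3 dominated[of s a s'] by (simp add: divide_right_mono)
    finally show ?thesis using 3 z by (simp add: llr_sample_def llr_def half_log_ratio_def)
  qed (use z in \<open>simp_all add: llr_sample_def llr_def half_log_ratio_def\<close>)
qed

lemma nn_integral_exp_half_log_ratio:
  fixes P :: "'s::finite \<Rightarrow> ('p \<Rightarrow> 'b) \<Rightarrow> 's pmf"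
  assumes q_pos: "\<And>s'. 0 < q s a s'"
  shows "(\<integral>\<^sup>+s'. ennreal (exp (half_log_ratio P q (s, a, s'))) \<partial>measure_pmf (P s a))
       = ennreal (\<Sum>s'\<in>UNIV. sqrt (pmf (P s a) s' * q s a s'))"
proof -
  have "ennreal (pmf (P s a) s') * ennreal (exp (half_log_ratio P q (s, a, s')))
      = ennreal (sqrt (pmf (P s a) s' * q s a s'))" for s'
    using q_pos[of s'] mult_exp_half_ln_ratio[of "pmf (P s a) s'" "q s a s'"]
    by (cases "pmf (P s a) s' = 0")
       (simp_all add: half_log_ratio_def order_less_le flip: ennreal_mult)
  then show ?thesis
    using q_pos by (simp add: nn_integral_measure_pmf nn_integral_count_space_finite
        sum_ennreal less_imp_le)
qed

lemma visitation_joint_actions: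
  assumes "valid_jpolicy A \<pi>" "(s, a) \<in> set_pmf (visitation \<gamma> P \<pi> \<rho>)"
  shows "a \<in> joint_actions A"
  using assms unfolding visitation_def sa_dist_def jact_dist_def
  by (auto simp: set_Pi_pmf PiE_dflt_def joint_actions_def valid_jpolicy_def valid_policy_def)

definition expected_ell :: "real \<Rightarrow> ('s::finite \<Rightarrow> ('p::finite \<Rightarrow> 'b) \<Rightarrow> 's pmf) \<Rightarrow> ('p \<Rightarrow> 's \<Rightarrow> 'b pmf)
    \<Rightarrow> 's pmf \<Rightarrow> ('s \<Rightarrow> ('p \<Rightarrow> 'b) \<Rightarrow> 's \<Rightarrow> real^'d) \<Rightarrow> real^'d \<Rightarrow> real" where
  "expected_ell \<gamma> P \<pi> \<rho> \<phi> \<theta> =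
     measure_pmf.expectation (visitation \<gamma> P \<pi> \<rho>) (\<lambda>(s, a). ell P \<phi> \<theta> s a)"

lemma integrable_ell: "integrable (measure_pmf M) (\<lambda>(s, a). ell P \<phi> \<theta> s a)"
  by (rule measure_pmf.integrable_const_bound[where B=1])
     (auto simp: ell_def hellinger_sq_nonneg hellinger_sq_le_1 split: prod.splits)

lemma nn_integral_exp_half_log_ratio_le:
  fixes P :: "'s::finite \<Rightarrow> ('p::finite \<Rightarrow> 'b) \<Rightarrow> 's pmf"
  assumes q_pos: "\<And>s a s'. 0 < q s a s'"
    and q_le: "\<And>s a s'. a \<in> joint_actions A \<Longrightarrow> q s a s' \<le> pmf (model_kernel \<phi> \<theta> s a) s' + 2 * \<epsilon>"
    and "0 \<le> \<epsilon>" and "valid_jpolicy A \<pi>"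
  shows "(\<integral>\<^sup>+z. ennreal (exp (half_log_ratio P q z)) \<partial>measure_pmf (transition_sample \<gamma> P \<pi> \<rho>))
      \<le> ennreal (1 - expected_ell \<gamma> P \<pi> \<rho> \<phi> \<theta> + real CARD('s) * sqrt (2 * \<epsilon>))"
proof -
  let ?V = "visitation \<gamma> P \<pi> \<rho>" and ?\<eta> = "real CARD('s) * sqrt (2 * \<epsilon>)"
  let ?ell = "\<lambda>(s, a). ell P \<phi> \<theta> s a"
  have "(\<integral>\<^sup>+z. ennreal (exp (half_log_ratio P q z)) \<partial>measure_pmf (transition_sample \<gamma> P \<pi> \<rho>))
      = (\<integral>\<^sup>+(s, a). (\<integral>\<^sup>+s'. ennreal (exp (half_log_ratio P q (s, a, s'))) \<partial>measure_pmf (P s a)) \<partial>measure_pmf ?V)"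
    unfolding transition_sample_def
    by (simp add: nn_integral_bind_pmf case_prod_unfold)
  also have "\<dots> \<le> (\<integral>\<^sup>+x. ennreal (1 + ?\<eta> - ?ell x) \<partial>measure_pmf ?V)"
  proof (intro nn_integral_mono_AE AE_pmfI)
    fix x assume "x \<in> set_pmf ?V"
    obtain s a where x: "x = (s, a)" by (cases x)
    have "a \<in> joint_actions A"
      using \<open>x \<in> set_pmf ?V\<close> unfolding x by (rule visitation_joint_actions[OF \<open>valid_jpolicy A \<pi>\<close>])
    then have "(\<Sum>s'\<in>UNIV. sqrt (pmf (P s a) s' * q s a s')) \<le> 1 - ell P \<phi> \<theta> s a + ?\<eta>"
      unfolding ell_def using q_le \<open>0 \<le> \<epsilon>\<close> by (intro sum_sqrt_pmf_mult_le) auto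
    then show "(case x of (s, a) \<Rightarrow> \<integral>\<^sup>+s'. ennreal (exp (half_log_ratio P q (s, a, s'))) \<partial>measure_pmf (P s a))
        \<le> ennreal (1 + ?\<eta> - ?ell x)"
      using x q_pos by (simp add: nn_integral_exp_half_log_ratio ennreal_leI algebra_simps)
  qed
  also have "\<dots> = ennreal (measure_pmf.expectation ?V (\<lambda>x. 1 + ?\<eta> - ?ell x))"
  proof (rule nn_integral_eq_integral)
    show "integrable (measure_pmf ?V) (\<lambda>x. 1 + ?\<eta> - ?ell x)"
      by (intro Bochner_Integration.integrable_diff integrable_ell) simp
    show "AE x in measure_pmf ?V. 0 \<le> 1 + ?\<eta> - ?ell x"
      using \<open>0 \<le> \<epsilon>\<close> by (intro AE_pmfI)
        (auto simp: ell_def hellinger_sq_le_1 intro!: add_increasing2 split: prod.splits)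
  qed
  also have "measure_pmf.expectation ?V (\<lambda>x. 1 + ?\<eta> - ?ell x) = 1 - expected_ell \<gamma> P \<pi> \<rho> \<phi> \<theta> + ?\<eta>"
    unfolding expected_ell_def using integrable_ell by (subst Bochner_Integration.integral_diff) auto
  finally show ?thesis .
qed

section \<open>Optimistic envelopes of the linear mixture models\<close>

definition is_kernel_param :: "('p \<Rightarrow> 'b set) \<Rightarrow> ('s::finite \<Rightarrow> ('p \<Rightarrow> 'b) \<Rightarrow> 's \<Rightarrow> real^'d)
    \<Rightarrow> real^'d \<Rightarrow> bool" where
  "is_kernel_param A \<phi> \<theta> \<longleftrightarrow>
     (\<forall>s. \<forall>a\<in>joint_actions A. (\<forall>s'. 0 \<le> \<phi> s a s' \<bullet> \<theta>) \<and> (\<Sum>s'\<in>UNIV. \<phi> s a s' \<bullet> \<theta>) = 1)"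

lemma pmf_model_kernel:
  assumes "is_kernel_param A \<phi> \<theta>" "a \<in> joint_actions A"
  shows "pmf (model_kernel \<phi> \<theta> s a) s' = \<phi> s a s' \<bullet> \<theta>"
proof -
  have "(\<integral>\<^sup>+x. ennreal (\<phi> s a x \<bullet> \<theta>) \<partial>count_space UNIV) = 1"
    using assms by (simp add: is_kernel_param_def nn_integral_count_space_finite sum_ennreal)
  then show ?thesis
    using assms unfolding model_kernel_def is_kernel_param_def by (subst pmf_embed_pmf) auto
qed

text \<open>Off the joint action set the models are unconstrained, hence the trivial bound 1.\<close>
definition envelope :: "('p \<Rightarrow> 'b set) \<Rightarrow> ('s \<Rightarrow> ('p \<Rightarrow> 'b) \<Rightarrow> 's \<Rightarrow> real^'d) \<Rightarrow> real \<Rightarrow> real^'d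
    \<Rightarrow> 's \<Rightarrow> ('p \<Rightarrow> 'b) \<Rightarrow> 's \<Rightarrow> real" where
  "envelope A \<phi> \<epsilon> c s a s' = (if a \<in> joint_actions A then \<phi> s a s' \<bullet> c + \<epsilon> else 1)"

lemma abs_inner_diff_le_dist:
  fixes x :: "'a::real_inner"
  assumes "norm x \<le> 1"
  shows "\<bar>x \<bullet> \<theta> - x \<bullet> c\<bar> \<le> dist \<theta> c"
proof -
  have "\<bar>x \<bullet> \<theta> - x \<bullet> c\<bar> \<le> norm x * norm (\<theta> - c)"
    by (metis Cauchy_Schwarz_ineq2 inner_diff_right)
  also have "\<dots> \<le> dist \<theta> c"
    using assms by (simp add: dist_norm mult_left_le_one_le)
  finally show ?thesis .
qed

lemma envelope_pos:
  assumes "is_kernel_param A \<phi> c" "0 < \<epsilon>"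
  shows "0 < envelope A \<phi> \<epsilon> c s a s'"
  using assms by (auto simp: envelope_def is_kernel_param_def add_nonneg_pos)

lemma pmf_model_kernel_le_envelope:
  assumes feature: "\<forall>s. \<forall>a\<in>joint_actions A. \<forall>s'. norm (\<phi> s a s') \<le> 1"
    and "is_kernel_param A \<phi> \<theta>" "dist \<theta> c < \<epsilon>"
  shows "pmf (model_kernel \<phi> \<theta> s a) s' \<le> envelope A \<phi> \<epsilon> c s a s'"
proof (cases "a \<in> joint_actions A")
  case True
  then have "\<phi> s a s' \<bullet> \<theta> - \<phi> s a s' \<bullet> c \<le> \<epsilon>"
    using abs_inner_diff_le_dist[of "\<phi> s a s'" \<theta> c] feature \<open>dist \<theta> c < \<epsilon>\<close> by force
  then show ?thesis
    using True assms(2) by (simp add: envelope_def pmf_model_kernel)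
qed (simp add: envelope_def pmf_le_1)

lemma envelope_le_pmf_model_kernel:
  assumes feature: "\<forall>s. \<forall>a\<in>joint_actions A. \<forall>s'. norm (\<phi> s a s') \<le> 1"
    and "is_kernel_param A \<phi> \<theta>" "dist \<theta> c < \<epsilon>" "a \<in> joint_actions A"
  shows "envelope A \<phi> \<epsilon> c s a s' \<le> pmf (model_kernel \<phi> \<theta> s a) s' + 2 * \<epsilon>"
proof -
  have "\<phi> s a s' \<bullet> c - \<phi> s a s' \<bullet> \<theta> \<le> \<epsilon>"
    using abs_inner_diff_le_dist[of "\<phi> s a s'" c \<theta>] assms by (force simp: dist_commute)
  then show ?thesis
    using assms(2,4) by (simp add: envelope_def pmf_model_kernel)
qed

lemma neg_llr_sample_le_half_log_envelope:
  assumes feature: "\<forall>s. \<forall>a\<in>joint_actions A. \<forall>s'. norm (\<phi> s a s') \<le> 1"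
    and "is_kernel_param A \<phi> c" "is_kernel_param A \<phi> \<theta>" "dist \<theta> c < \<epsilon>" "0 < \<epsilon>"
  shows "- llr_sample P \<phi> \<theta> z \<le> ereal (2 * half_log_ratio P (envelope A \<phi> \<epsilon> c) z)"
  using assms
  by (intro neg_llr_sample_le_half_log_ratio pmf_model_kernel_le_envelope[OF feature] envelope_pos)

lemma nn_integral_exp_half_log_envelope_le:
  fixes P :: "'s::finite \<Rightarrow> ('p::finite \<Rightarrow> 'b) \<Rightarrow> 's pmf"
  assumes feature: "\<forall>s. \<forall>a\<in>joint_actions A. \<forall>s'. norm (\<phi> s a s') \<le> 1"
    and "is_kernel_param A \<phi> c" "is_kernel_param A \<phi> \<theta>" "dist \<theta> c < \<epsilon>" "0 < \<epsilon>"
    and "valid_jpolicy A \<pi>"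
  shows "(\<integral>\<^sup>+z. ennreal (exp (half_log_ratio P (envelope A \<phi> \<epsilon> c) z))
           \<partial>measure_pmf (transition_sample \<gamma> P \<pi> \<rho>))
      \<le> ennreal (1 - expected_ell \<gamma> P \<pi> \<rho> \<phi> \<theta> + real CARD('s) * sqrt (2 * \<epsilon>))"
  using assms
  by (intro nn_integral_exp_half_log_ratio_le envelope_pos envelope_le_pmf_model_kernel[OF feature]) auto

section \<open>The uniform deviation bound\<close>

text \<open>Each round yields \<open>N + 1\<close> sample streams: stream \<open>None\<close> is drawn under the equilibrium
  \<open>\<pi>\<close>, stream \<open>Some n\<close> under player \<open>n\<close>'s best response \<open>\<pi>(n := \<pi>t n)\<close>.\<close>
definition round_transition :: "'p option \<Rightarrow> ('s,'p,'b) round \<Rightarrow> ('s,'p,'b) transition" where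
  "round_transition G w = (case G of None \<Rightarrow> fst w | Some n \<Rightarrow> snd w n)"

definition round_policy :: "'p option \<Rightarrow> ('p \<Rightarrow> 's \<Rightarrow> 'b pmf) \<Rightarrow> ('p \<Rightarrow> 's \<Rightarrow> 'b pmf)
    \<Rightarrow> 'p \<Rightarrow> 's \<Rightarrow> 'b pmf" where
  "round_policy G \<pi> \<pi>t = (case G of None \<Rightarrow> \<pi> | Some n \<Rightarrow> \<pi>(n := \<pi>t n))"

lemma map_pmf_round_transition:
  "map_pmf (round_transition G) (round_dist \<gamma> P \<rho> \<pi> \<pi>t)
     = transition_sample \<gamma> P (round_policy G \<pi> \<pi>t) \<rho>"
proof (cases G)
  case None
  then have "map_pmf (round_transition G) (round_dist \<gamma> P \<rho> \<pi> \<pi>t) = map_pmf fst (round_dist \<gamma> P \<rho> \<pi> \<pi>t)"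
    by (intro map_pmf_cong) (simp_all add: round_transition_def)
  also have "\<dots> = transition_sample \<gamma> P \<pi> \<rho>"
    by (simp add: round_dist_def map_fst_pair_pmf)
  finally show ?thesis
    using None by (simp add: round_policy_def)
next
  case (Some n)
  then have "map_pmf (round_transition G) (round_dist \<gamma> P \<rho> \<pi> \<pi>t)
      = map_pmf (\<lambda>w. snd w n) (round_dist \<gamma> P \<rho> \<pi> \<pi>t)"
    by (intro map_pmf_cong) (simp_all add: round_transition_def)
  also have "\<dots> = map_pmf (\<lambda>g. g n) (map_pmf snd (round_dist \<gamma> P \<rho> \<pi> \<pi>t))"
    by (simp add: map_pmf_comp)
  also have "\<dots> = transition_sample \<gamma> P (\<pi>(n := \<pi>t n)) \<rho>"
    unfolding round_dist_def map_snd_pair_pmf by (simp add: Pi_pmf_component)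
  finally show ?thesis
    using Some by (simp add: round_policy_def)
qed

lemma run_dist_eq_history_pmf:
  "run_dist \<gamma> P \<rho> Pol Br k = history_pmf (\<lambda>hs. round_dist \<gamma> P \<rho> (Pol hs) (Br hs)) k"
  by (induction k) simp_all

lemma neg_sum_le_of_log_increments:
  fixes x :: "nat \<Rightarrow> ereal" and Z L E :: "nat \<Rightarrow> real"
  assumes x_le: "\<And>i. i < t \<Longrightarrow> - x i \<le> ereal (2 * Z i)"
    and L_le: "\<And>i. i < t \<Longrightarrow> L i \<le> \<eta> - E i"
    and increments: "(\<Sum>i<t. Z i - L i) < ln c"
  shows "- (\<Sum>i<t. x i) \<le> ereal (- 2 * (\<Sum>i<t. E i) + 2 * (real t * \<eta>) + 2 * ln c)"
proof -
  have "(\<Sum>i<t. Z i) < (\<Sum>i<t. L i) + ln c"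
    using increments by (simp add: sum_subtractf)
  also have "(\<Sum>i<t. L i) \<le> (\<Sum>i<t. \<eta> - E i)"
    using L_le by (intro sum_mono) auto
  finally have Z_le: "2 * (\<Sum>i<t. Z i) \<le> - 2 * (\<Sum>i<t. E i) + 2 * (real t * \<eta>) + 2 * ln c"
    by (simp add: sum_subtractf)
  have "ereal (- (2 * (\<Sum>i<t. Z i))) = (\<Sum>i<t. ereal (- (2 * Z i)))"
    by (simp add: sum_distrib_left sum_negf)
  also have "\<dots> \<le> (\<Sum>i<t. x i)"
    using x_le by (intro sum_mono) (metis ereal_uminus_le_reorder uminus_ereal.simps(1) lessThan_iff)
  finally have "- (\<Sum>i<t. x i) \<le> ereal (2 * (\<Sum>i<t. Z i))"
    by (metis ereal_uminus_le_reorder uminus_ereal.simps(1))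
  with Z_le show ?thesis
    by (metis ereal_less_eq(3) order_trans)
qed

text \<open>Ville's inequality for each centre \<open>c\<close> of the net, applied to \<open>Z\<^sub>c\<close> along the stream
  \<open>sel\<close> of the history, and a union bound over the net.\<close>
lemma llr_deviation_prob_le:
  fixes P :: "'s::finite \<Rightarrow> ('p::finite \<Rightarrow> 'b) \<Rightarrow> 's pmf"
    and \<phi> :: "'s \<Rightarrow> ('p \<Rightarrow> 'b) \<Rightarrow> 's \<Rightarrow> real^'d"
    and sel :: "'h \<Rightarrow> ('s,'p,'b) transition"
  assumes feature: "\<forall>s. \<forall>a\<in>joint_actions A. \<forall>s'. norm (\<phi> s a s') \<le> 1"
    and kernel: "\<forall>\<theta>\<in>\<Theta>. is_kernel_param A \<phi> \<theta>"
    and net: "finite C" "C \<subseteq> \<Theta>" "\<forall>\<theta>\<in>\<Theta>. \<exists>c\<in>C. dist \<theta> c < \<epsilon>"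
    and "0 < \<epsilon>" "0 < cc"
    and cost: "\<And>t. t \<le> T \<Longrightarrow> 2 * (real t * (real CARD('s) * sqrt (2 * \<epsilon>))) + 2 * ln cc \<le> B"
    and marginal: "\<And>hs. length hs < T \<Longrightarrow> map_pmf sel (K hs) = transition_sample \<gamma> P (\<pi> hs) \<rho>"
    and valid: "\<And>hs. length hs < T \<Longrightarrow> valid_jpolicy A (\<pi> hs)"
  shows "measure_pmf.prob (history_pmf K T)
     {hs. \<exists>t\<le>T. \<exists>\<theta>\<in>\<Theta>. \<not> - (\<Sum>i<t. llr_sample P \<phi> \<theta> (sel (hs ! i)))
            \<le> ereal (- 2 * (\<Sum>i<t. expected_ell \<gamma> P (\<pi> (take i hs)) \<rho> \<phi> \<theta>) + B)}
     \<le> card C / cc"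
    (is "measure_pmf.prob ?M {hs. \<exists>t\<le>T. \<exists>\<theta>\<in>\<Theta>. \<not> ?bound hs t \<theta>} \<le> _")
proof -
  let ?\<eta> = "real CARD('s) * sqrt (2 * \<epsilon>)"
  define Z where "Z c = half_log_ratio P (envelope A \<phi> \<epsilon> c) \<circ> sel" for c
  define bad where
    "bad c = {hs. \<exists>t\<le>T. ln cc \<le> (\<Sum>i<t. Z c (hs ! i) - log_mgf (K (take i hs)) (Z c))}" for c
  have mgf_le: "(\<integral>\<^sup>+w. ennreal (exp (Z c w)) \<partial>measure_pmf (K hs))
      \<le> ennreal (1 - expected_ell \<gamma> P (\<pi> hs) \<rho> \<phi> \<theta> + ?\<eta>)"
    if "length hs < T" "c \<in> \<Theta>" "\<theta> \<in> \<Theta>" "dist \<theta> c < \<epsilon>" for hs c \<theta>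
  proof -
    have "(\<integral>\<^sup>+w. ennreal (exp (Z c w)) \<partial>measure_pmf (K hs))
        = (\<integral>\<^sup>+z. ennreal (exp (half_log_ratio P (envelope A \<phi> \<epsilon> c) z))
             \<partial>measure_pmf (transition_sample \<gamma> P (\<pi> hs) \<rho>))"
      by (simp add: Z_def flip: marginal[OF that(1)])
    also have "\<dots> \<le> ennreal (1 - expected_ell \<gamma> P (\<pi> hs) \<rho> \<phi> \<theta> + ?\<eta>)"
      using that kernel \<open>0 < \<epsilon>\<close> by (intro nn_integral_exp_half_log_envelope_le[OF feature] valid) auto
    finally show ?thesis .
  qed
  have "measure_pmf.prob ?M (bad c) \<le> 1 / cc" if "c \<in> C" for c
    unfolding bad_def
  proof (rule exp_ville_inequality_pmf[OF _ \<open>0 < cc\<close>])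
    fix hs :: "'h list" assume "length hs < T"
    then have "(\<integral>\<^sup>+w. ennreal (exp (Z c w)) \<partial>measure_pmf (K hs))
        \<le> ennreal (1 - expected_ell \<gamma> P (\<pi> hs) \<rho> \<phi> c + ?\<eta>)"
      using that net(2) \<open>0 < \<epsilon>\<close> by (intro mgf_le) auto
    then show "(\<integral>\<^sup>+w. ennreal (exp (Z c w)) \<partial>measure_pmf (K hs)) < \<top>"
      using ennreal_less_top by (rule order.strict_trans1)
  qed
  then have prob_bad: "measure_pmf.prob ?M (\<Union>c\<in>C. bad c) \<le> card C / cc"
    using measure_pmf_prob_UN_le[OF net(1), of ?M bad "1 / cc"] by simp
  have "hs \<in> (\<Union>c\<in>C. bad c)"
    if hs: "hs \<in> set_pmf ?M" and "t \<le> T" "\<theta> \<in> \<Theta>" "\<not> ?bound hs t \<theta>" for hs t \<theta>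
  proof (rule ccontr)
    assume "hs \<notin> (\<Union>c\<in>C. bad c)"
    obtain c where "c \<in> C" "dist \<theta> c < \<epsilon>" using net(3) \<open>\<theta> \<in> \<Theta>\<close> by blast
    then have "c \<in> \<Theta>" "hs \<notin> bad c" using net(2) \<open>hs \<notin> _\<close> by auto
    have short: "length (take i hs) < T" if "i < t" for i
      using that \<open>t \<le> T\<close> length_history_pmf[OF hs] by simp
    have "- (\<Sum>i<t. llr_sample P \<phi> \<theta> (sel (hs ! i)))
        \<le> ereal (- 2 * (\<Sum>i<t. expected_ell \<gamma> P (\<pi> (take i hs)) \<rho> \<phi> \<theta>) + 2 * (real t * ?\<eta>) + 2 * ln cc)"
    proof (rule neg_sum_le_of_log_increments)
      show "- llr_sample P \<phi> \<theta> (sel (hs ! i)) \<le> ereal (2 * Z c (hs ! i))" for i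
        unfolding Z_def o_def using kernel \<open>c \<in> \<Theta>\<close> \<open>\<theta> \<in> \<Theta>\<close> \<open>dist \<theta> c < \<epsilon>\<close> \<open>0 < \<epsilon>\<close>
        by (intro neg_llr_sample_le_half_log_envelope[OF feature]) auto
      show "log_mgf (K (take i hs)) (Z c) \<le> ?\<eta> - expected_ell \<gamma> P (\<pi> (take i hs)) \<rho> \<phi> \<theta>"
        if "i < t" for i
        using log_mgf_le[OF mgf_le[OF short[OF that] \<open>c \<in> \<Theta>\<close> \<open>\<theta> \<in> \<Theta>\<close> \<open>dist \<theta> c < \<epsilon>\<close>]] by simp
      show "(\<Sum>i<t. Z c (hs ! i) - log_mgf (K (take i hs)) (Z c)) < ln cc"
        using \<open>hs \<notin> bad c\<close> \<open>t \<le> T\<close> by (auto simp: bad_def)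
    qed
    also have "\<dots> \<le> ereal (- 2 * (\<Sum>i<t. expected_ell \<gamma> P (\<pi> (take i hs)) \<rho> \<phi> \<theta>) + B)"
      using cost[OF \<open>t \<le> T\<close>] by simp
    finally show False using \<open>\<not> ?bound hs t \<theta>\<close> by contradiction
  qed
  then have "AE hs in measure_pmf ?M.
      hs \<in> {hs. \<exists>t\<le>T. \<exists>\<theta>\<in>\<Theta>. \<not> ?bound hs t \<theta>} \<longrightarrow> hs \<in> (\<Union>c\<in>C. bad c)"
    by (intro AE_pmfI) blast
  then show ?thesis
    by (intro order_trans[OF measure_pmf.finite_measure_mono_AE prob_bad]) auto
qed

lemma discretisation_cost_le:
  assumes "t \<le> T" "0 < T" "0 < S"
  shows "real t * (S * sqrt (2 * (1 / (real T ^ 2 * S ^ 2)))) \<le> sqrt 2"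
proof -
  have "S * sqrt (2 * (1 / (real T ^ 2 * S ^ 2))) = sqrt 2 / real T"
    using assms by (simp add: real_sqrt_divide real_sqrt_mult field_simps)
  then have "real t * (S * sqrt (2 * (1 / (real T ^ 2 * S ^ 2)))) = sqrt 2 * (real t / real T)"
    by simp
  also have "\<dots> \<le> sqrt 2 * 1"
    using assms by (intro mult_left_mono) auto
  finally show ?thesis by simp
qed

lemma ln_net_size_le:
  assumes "0 < card C" "real (card C) \<le> (1 + 2 * R / \<epsilon>) ^ d" "0 < \<epsilon>" "0 \<le> R" "0 < N" "0 < \<delta>"
  shows "ln (real (card C) * N / \<delta>) \<le> ln (N / \<delta>) + real d * ln (1 + 2 * R / \<epsilon>)"
proof -
  have "ln (real (card C) * N / \<delta>) = ln (real (card C)) + ln (N / \<delta>)"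
    using assms by (simp add: ln_mult flip: times_divide_eq_right)
  also have "ln (real (card C)) \<le> ln ((1 + 2 * R / \<epsilon>) ^ d)"
    using assms by simp
  also have "\<dots> = real d * ln (1 + 2 * R / \<epsilon>)"
    using assms by (simp add: ln_realpow add_pos_nonneg)
  finally show ?thesis by simp
qed

lemma sum_atLeast_Suc_0_lessThan:
  fixes f :: "nat \<Rightarrow> 'a::comm_monoid_add"
  shows "(\<Sum>i\<in>{Suc 0..<t}. f i) = (\<Sum>i<t - 1. f (Suc i))"
proof (cases t)
  case (Suc t')
  then show ?thesis
    using sum.shift_bounds_Suc_ivl[of f 0 t'] by (simp add: atLeast0LessThan)
qed simp

lemma run_dist_llr_deviation_prob_le:
  fixes A :: "'p::finite \<Rightarrow> 'b set"
    and P :: "'s::finite \<Rightarrow> ('p \<Rightarrow> 'b) \<Rightarrow> 's pmf"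
    and \<phi> :: "'s \<Rightarrow> ('p \<Rightarrow> 'b) \<Rightarrow> 's \<Rightarrow> real^'d::finite"
    and Pol Br :: "('s,'p,'b) round list \<Rightarrow> 'p \<Rightarrow> 's \<Rightarrow> 'b pmf"
  assumes feature: "\<forall>s. \<forall>a\<in>joint_actions A. \<forall>s'. norm (\<phi> s a s') \<le> 1"
    and param_bound: "\<forall>\<theta>\<in>\<Theta>. norm \<theta> \<le> sqrt (real CARD('d))"
    and kernel: "\<forall>\<theta>\<in>\<Theta>. is_kernel_param A \<phi> \<theta>"
    and "\<Theta> \<noteq> {}"
    and valid: "\<forall>hs G. length hs < T \<longrightarrow> valid_jpolicy A (round_policy G (Pol hs) (Br hs))"
    and "0 < \<delta>" "0 < T"
  shows "measure_pmf.prob (run_dist \<gamma> P \<rho> Pol Br T)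
     {hs. \<exists>G. \<exists>t\<le>T. \<exists>\<theta>\<in>\<Theta>. \<not> - (\<Sum>i<t. llr_sample P \<phi> \<theta> (round_transition G (hs ! i)))
          \<le> ereal (- 2 * (\<Sum>i<t. expected_ell \<gamma> P (round_policy G (Pol (take i hs)) (Br (take i hs))) \<rho> \<phi> \<theta>)
                   + (2 * sqrt 2 + 2 * ln ((real CARD('p) + 1) / \<delta>)
                      + 2 * real CARD('d) * ln (1 + 2 * sqrt (real CARD('d)) * (real T)^2 * (real CARD('s))^2)))}
     \<le> \<delta>"
    (is "measure_pmf.prob ?M {hs. \<exists>G. \<exists>t\<le>T. \<exists>\<theta>\<in>\<Theta>. \<not> - ?llr G t \<theta> hs \<le> ereal (- 2 * ?ell G t \<theta> hs + ?cost)}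
            \<le> \<delta>")
proof -
  let ?S = "real CARD('s)" and ?d = "real CARD('d)"
  define N where "N = real CARD('p) + 1"
  have "0 < N" by (simp add: N_def)
  define \<epsilon> where "\<epsilon> = 1 / (real T ^ 2 * ?S ^ 2)"
  have "0 < \<epsilon>" using \<open>0 < T\<close> by (simp add: \<epsilon>_def)
  have "\<Theta> \<subseteq> cball 0 (sqrt ?d)"
    using param_bound by (simp add: subset_iff)
  then obtain C where "finite C" "C \<subseteq> \<Theta>"
    and card_C: "real (card C) \<le> (1 + 2 * sqrt ?d / \<epsilon>) ^ CARD('d)"
    and cover: "\<forall>\<theta>\<in>\<Theta>. \<exists>c\<in>C. dist \<theta> c < \<epsilon>"
    by (rule obtain_finite_net[OF _ \<open>0 < \<epsilon>\<close>]) simp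
  note net = \<open>finite C\<close> \<open>C \<subseteq> \<Theta>\<close> cover
  have "C \<noteq> {}" using cover \<open>\<Theta> \<noteq> {}\<close> by blast
  then have "0 < card C" using \<open>finite C\<close> by (simp add: card_gt_0_iff)
  define cc where "cc = real (card C) * N / \<delta>"
  have "0 < cc" using \<open>0 < card C\<close> \<open>0 < \<delta>\<close> \<open>0 < N\<close> by (simp add: cc_def)
  have cost: "2 * (real t * (?S * sqrt (2 * \<epsilon>))) + 2 * ln cc \<le> ?cost" if "t \<le> T" for t
  proof -
    have "real t * (?S * sqrt (2 * \<epsilon>)) \<le> sqrt 2"
      unfolding \<epsilon>_def using that \<open>0 < T\<close> by (intro discretisation_cost_le) auto
    moreover have "ln cc \<le> ln (N / \<delta>) + ?d * ln (1 + 2 * sqrt ?d / \<epsilon>)"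
      unfolding cc_def using \<open>0 < card C\<close> card_C \<open>0 < \<epsilon>\<close> \<open>0 < N\<close> \<open>0 < \<delta>\<close>
      by (intro ln_net_size_le) auto
    moreover have "2 * sqrt ?d / \<epsilon> = 2 * sqrt ?d * (real T)\<^sup>2 * ?S\<^sup>2"
      by (simp add: \<epsilon>_def)
    ultimately show ?thesis
      unfolding N_def[symmetric] by (simp only:)
  qed
  define bad where
    "bad G = {hs. \<exists>t\<le>T. \<exists>\<theta>\<in>\<Theta>. \<not> - ?llr G t \<theta> hs \<le> ereal (- 2 * ?ell G t \<theta> hs + ?cost)}" for G
  have violations_eq: "{hs. \<exists>G. \<exists>t\<le>T. \<exists>\<theta>\<in>\<Theta>. \<not> - ?llr G t \<theta> hs \<le> ereal (- 2 * ?ell G t \<theta> hs + ?cost)}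
      = (\<Union>G. bad G)"
    by (auto simp: bad_def)
  have "measure_pmf.prob ?M (bad G) \<le> card C / cc" for G
    unfolding bad_def run_dist_eq_history_pmf
    by (rule llr_deviation_prob_le[OF feature kernel net \<open>0 < \<epsilon>\<close> \<open>0 < cc\<close> cost])
       (simp_all add: map_pmf_round_transition valid)
  then have "measure_pmf.prob ?M (\<Union>G. bad G) \<le> card (UNIV :: 'p option set) * (card C / cc)"
    using measure_pmf_prob_UN_le[of UNIV ?M bad "card C / cc"] by simp
  also have "\<dots> = N * (card C / cc)"
    by (simp add: N_def UNIV_option_conv card_image)
  also have "\<dots> = \<delta>"
    unfolding cc_def using \<open>0 < card C\<close> \<open>0 < \<delta>\<close> \<open>0 < N\<close> by simp
  finally show ?thesis
    unfolding violations_eq .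
qed

theorem lemmaC2:
  fixes A :: "'p::finite \<Rightarrow> 'b set"
    and P :: "'s::finite \<Rightarrow> ('p \<Rightarrow> 'b) \<Rightarrow> 's pmf"
    and r :: "'p \<Rightarrow> 's \<Rightarrow> ('p \<Rightarrow> 'b) \<Rightarrow> real"
    and \<rho> :: "'s pmf"
    and \<gamma> \<beta> \<alpha> \<delta> :: real
    and \<pi>ref :: "'p \<Rightarrow> 's \<Rightarrow> 'b pmf"
    and \<phi> :: "'s \<Rightarrow> ('p \<Rightarrow> 'b) \<Rightarrow> 's \<Rightarrow> real^'d::finite"
    and \<Theta> :: "(real^'d) set"
    and T :: nat
    and \<theta>0 :: "real^'d"
    and Pol :: "('s,'p,'b) round list \<Rightarrow> 'p \<Rightarrow> 's \<Rightarrow> 'b pmf"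
    and Th :: "('s,'p,'b) round list \<Rightarrow> real^'d"
    and Br :: "('s,'p,'b) round list \<Rightarrow> 'p \<Rightarrow> 's \<Rightarrow> 'b pmf"
  assumes actions: "\<forall>n. finite (A n) \<and> A n \<noteq> {}"
    and discount: "0 \<le> \<gamma>" "\<gamma> < 1"
    and kl_coeff: "0 \<le> \<beta>"
    and alpha_pos: "0 < \<alpha>"
    and rewards: "\<forall>n s. \<forall>a\<in>joint_actions A. 0 \<le> r n s a \<and> r n s a \<le> 1"
    and ref_policies: "valid_jpolicy A \<pi>ref"
    and feature_bound: "\<forall>s. \<forall>a\<in>joint_actions A. \<forall>s'. norm (\<phi> s a s') \<le> 1"
    and param_bound: "\<forall>\<theta>\<in>\<Theta>. norm \<theta> \<le> sqrt (real CARD('d))"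
    and model_is_kernel: "\<forall>\<theta>\<in>\<Theta>. \<forall>s. \<forall>a\<in>joint_actions A.
            (\<forall>s'. 0 \<le> \<phi> s a s' \<bullet> \<theta>) \<and> (\<Sum>s'\<in>UNIV. \<phi> s a s' \<bullet> \<theta>) = 1"
    and realizable: "\<exists>\<theta>\<^sub>s\<in>\<Theta>. \<forall>s. \<forall>a\<in>joint_actions A. \<forall>s'. pmf (P s a) s' = \<phi> s a s' \<bullet> \<theta>\<^sub>s"
    and init: "\<theta>0 \<in> \<Theta>"
    and alg_equilibrium: "\<forall>hs. length hs < T \<longrightarrow>
            is_equilibrium \<gamma> \<beta> \<pi>ref r A
              (model_kernel \<phi> (if hs = [] then \<theta>0 else Th (butlast hs))) (Pol hs) \<rho>"
    and alg_mle: "\<forall>hs. length hs < T \<longrightarrow> Th hs \<in> \<Theta> \<and>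
            (\<forall>\<theta>\<in>\<Theta>. mle_objective \<gamma> \<beta> \<pi>ref r A \<phi> \<alpha> \<rho> hs (Pol hs) (Th hs)
                      \<le> mle_objective \<gamma> \<beta> \<pi>ref r A \<phi> \<alpha> \<rho> hs (Pol hs) \<theta>)"
    and alg_best_response: "\<forall>hs. length hs < T \<longrightarrow> (\<forall>n. valid_policy (A n) (Br hs n) \<and>
            game_value \<gamma> \<beta> \<pi>ref r (model_kernel \<phi> (Th hs)) ((Pol hs)(n := Br hs n)) n \<rho>
              = br_value \<gamma> \<beta> \<pi>ref r A (model_kernel \<phi> (Th hs)) (Pol hs) n \<rho>)"
    and delta: "0 < \<delta>" "\<delta> < 1"
  shows "measure_pmf.prob (run_dist \<gamma> P \<rho> Pol Br T)
     {hs. (\<forall>t\<in>{1..T}. \<forall>\<theta>\<in>\<Theta>.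
             - (\<Sum>i\<in>{1..<t}. llr_sample P \<phi> \<theta> (fst (hs ! (i - 1))))
             \<le> ereal (- 2 * (\<Sum>i\<in>{1..<t}. measure_pmf.expectation
                                (visitation \<gamma> P (Pol (take (i - 1) hs)) \<rho>)
                                (\<lambda>(s, a). ell P \<phi> \<theta> s a))
                     + 2 * sqrt 2 + 2 * ln ((real CARD('p) + 1) / \<delta>)
                     + 2 * real CARD('d) * ln (1 + 2 * sqrt (real CARD('d)) * (real T)^2 * (real CARD('s))^2)))
        \<and> (\<forall>t\<in>{1..T}. \<forall>\<theta>\<in>\<Theta>. \<forall>n.
             - (\<Sum>i\<in>{1..<t}. llr_sample P \<phi> \<theta> (snd (hs ! (i - 1)) n))
             \<le> ereal (- 2 * (\<Sum>i\<in>{1..<t}. measure_pmf.expectation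
                                (visitation \<gamma> P ((Pol (take (i - 1) hs))(n := Br (take (i - 1) hs) n)) \<rho>)
                                (\<lambda>(s, a). ell P \<phi> \<theta> s a))
                     + 2 * sqrt 2 + 2 * ln ((real CARD('p) + 1) / \<delta>)
                     + 2 * real CARD('d) * ln (1 + 2 * sqrt (real CARD('d)) * (real T)^2 * (real CARD('s))^2)))}
   \<ge> 1 - \<delta>"
proof (cases "T = 0")
  case True
  then show ?thesis using delta by simp
next
  case False
  have kernel: "\<forall>\<theta>\<in>\<Theta>. is_kernel_param A \<phi> \<theta>"
    using model_is_kernel by (simp add: is_kernel_param_def)
  have valid: "\<forall>hs G. length hs < T \<longrightarrow> valid_jpolicy A (round_policy G (Pol hs) (Br hs))"
    using alg_equilibrium alg_best_response
    by (auto simp: round_policy_def is_equilibrium_def valid_jpolicy_def split: option.split)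
  have "\<Theta> \<noteq> {}" "0 < T" using init False by auto
  note violations = run_dist_llr_deviation_prob_le[OF feature_bound param_bound kernel
      \<open>\<Theta> \<noteq> {}\<close> valid delta(1) \<open>0 < T\<close>]
  show ?thesis
    apply (rule measure_pmf_prob_ge_of_compl[OF violations])
    apply (intro subsetI CollectI conjI ballI allI)
    subgoal for hs t \<theta>
      by (auto simp: sum_atLeast_Suc_0_lessThan round_transition_def round_policy_def expected_ell_def
          algebra_simps dest!: spec[where x=None] spec[where x="t - 1"])
    subgoal for hs t \<theta> n
      by (auto simp: sum_atLeast_Suc_0_lessThan round_transition_def round_policy_def expected_ell_def
          algebra_simps dest!: spec[where x="Some n"] spec[where x="t - 1"])
    done
qed

end
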